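(* For all integers $\alpha,k,\ell$ with $k \geq \ell \geq 2$ and $\alpha \geq 2$, there exists an $(\alpha,k,\ell)$-gadget $(G,A)$; moreover, for fixed $k,\ell$, such a gadget can be chosen with $|V(G)|+|E(G)| = O(\alpha)$.
   Context: All graphs are finite and loopless but may have parallel edges. A linear forest is a graph each of whose components is a path; it is $k$-bounded if each component has at most $k$ edges. A $(k,\ell)$-bounded linear forest decomposition of $G$ is a pair $(F,F')$ of spanning subgraphs whose edge sets partition $E(G)$, with $F$ a $k$-bounded linear forest and $F'$ an $\ell$-bounded linear forest. For a graph $G$, a set $A\subseteq V(G)$ all of whose vertices have degree $1$ in $G$, a positive integer $m$ and a linear forest $L$ in $G$, we say $A$ is $(m,L)$-covered if every $a \in A$ is an endpoint of a path of length $m$ (i.e. with $m$ edges) in $L$. An $(\alpha,k,\ell)$-gadget is a pair $(G,A)$ with $A\subseteq V(G)$ such that: (1) $d_G(a)=1$ for all $a\in A$; (2) $|A|=\alpha$; (3) there is a $(k,\ell)$-bounded linear forest decomposition $(F,F')$ of $G$ in which $A$ is $(k,F)$-covered; (4) there is a $(k,\ell)$-bounded linear forest decomposition $(F,F')$ of $G$ in which $A$ is $(\ell,F')$-covered; (5) for every $(k,\ell)$-bounded linear forest decomposition $(F,F')$ of $G$, $A$ is $(k,F)$-covered or $A$ is $(\ell,F')$-covered. *)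

theory Defs
  imports Main
begin

text \<open>A finite loopless multigraph: vertex set V, edge set E, and an endpoint map
  ends assigning to each edge a 2-element set of vertices (parallel edges allowed).\<close>

definition multigraph :: "'v set \<Rightarrow> 'e set \<Rightarrow> ('e \<Rightarrow> 'v set) \<Rightarrow> bool" where
  "multigraph V E ends \<longleftrightarrow> finite V \<and> finite E \<and>
     (\<forall>e\<in>E. ends e \<subseteq> V \<and> card (ends e) = 2)"

definition degree :: "'e set \<Rightarrow> ('e \<Rightarrow> 'v set) \<Rightarrow> 'v \<Rightarrow> nat" where
  "degree E ends v = card {e\<in>E. v \<in> ends e}"

definition is_path :: "'e set \<Rightarrow> ('e \<Rightarrow> 'v set) \<Rightarrow> 'v list \<Rightarrow> 'e list \<Rightarrow> bool" where
  "is_path F ends vs es \<longleftrightarrow> length vs = Suc (length es) \<and> distinct vs \<and> distinct es \<and>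
     (\<forall>i<length es. es ! i \<in> F \<and> ends (es ! i) = {vs ! i, vs ! Suc i})"

definition adj :: "'e set \<Rightarrow> ('e \<Rightarrow> 'v set) \<Rightarrow> ('v \<times> 'v) set" where
  "adj F ends = {(u, v). \<exists>e\<in>F. ends e = {u, v}}"

definition component :: "'e set \<Rightarrow> ('e \<Rightarrow> 'v set) \<Rightarrow> 'v \<Rightarrow> 'v set" where
  "component F ends v = {u. (v, u) \<in> (adj F ends)\<^sup>*}"

definition bounded_linear_forest ::
  "'v set \<Rightarrow> 'e set \<Rightarrow> ('e \<Rightarrow> 'v set) \<Rightarrow> nat \<Rightarrow> bool" where
  "bounded_linear_forest V F ends k \<longleftrightarrow>
     (\<forall>v\<in>V. \<exists>vs es. is_path F ends vs es \<and> set vs = component F ends v \<and>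
        set es = {e\<in>F. ends e \<subseteq> component F ends v} \<and> length es \<le> k)"

definition bounded_lfd ::
  "'v set \<Rightarrow> 'e set \<Rightarrow> ('e \<Rightarrow> 'v set) \<Rightarrow> nat \<Rightarrow> nat \<Rightarrow> 'e set \<Rightarrow> bool" where
  "bounded_lfd V E ends k l F \<longleftrightarrow> F \<subseteq> E \<and>
     bounded_linear_forest V F ends k \<and> bounded_linear_forest V (E - F) ends l"

definition covered :: "'v set \<Rightarrow> nat \<Rightarrow> 'e set \<Rightarrow> ('e \<Rightarrow> 'v set) \<Rightarrow> bool" where
  "covered A m L ends \<longleftrightarrow> (\<forall>a\<in>A. \<exists>vs es. is_path L ends vs es \<and> length es = m \<and>
      (hd vs = a \<or> last vs = a))"

definition gadget ::
  "'v set \<Rightarrow> 'e set \<Rightarrow> ('e \<Rightarrow> 'v set) \<Rightarrow> 'v set \<Rightarrow> nat \<Rightarrow> nat \<Rightarrow> nat \<Rightarrow> bool" where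
  "gadget V E ends A \<alpha> k l \<longleftrightarrow> multigraph V E ends \<and> A \<subseteq> V \<and>
     (\<forall>a\<in>A. degree E ends a = 1) \<and> card A = \<alpha> \<and>
     (\<exists>F. bounded_lfd V E ends k l F \<and> covered A k F ends) \<and>
     (\<exists>F. bounded_lfd V E ends k l F \<and> covered A l (E - F) ends) \<and>
     (\<forall>F. bounded_lfd V E ends k l F \<longrightarrow> covered A k F ends \<or> covered A l (E - F) ends)"

end

theory Submission
  imports Defs "HOL-Library.Nat_Bijection"
begin

text \<open>The gadget is a chain of hubs (paths of length two) joined by tentacles: paths of length
  k - 1 in which every edge except every (l + 1)-st is doubled, attached by two port edges. In a
  (k, l)-bounded linear forest decomposition (F, G) the two copies of a doubled edge lie on
  different sides, a single edge must lie in F, and the two ports of a tentacle lie on different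
  sides. So each tentacle together with its port in F is a path of length k in F, and with its port
  in G contains a path of length l in G: a port fills the bound of its side, so every other edge at
  its far end lies on the opposite side. This forces consecutive hubs to alternate between F and G,
  hence the terminals hanging from the tentacles at the even hubs all end paths of length k in F, or
  all end paths of length l in G. Both phases of the alternation are realised by explicit
  decompositions, and 2 alpha - 1 hubs give a gadget of size O(k alpha).\<close>

section \<open>Paths and bounded linear forests\<close>

lemma sym_adj: "sym (adj F ends)"
  unfolding adj_def sym_def by (auto simp: insert_commute)

lemma is_path_reach:
  assumes "is_path F ends vs es" "i < length vs" "j < length vs"
  shows "(vs ! i, vs ! j) \<in> (adj F ends)\<^sup>*"
proof -
  have from_hd: "(vs ! 0, vs ! i) \<in> (adj F ends)\<^sup>*" if "i < length vs" for i
    using that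
  proof (induction i)
    case (Suc i)
    then have "es ! i \<in> F \<and> ends (es ! i) = {vs ! i, vs ! Suc i}"
      using assms(1) unfolding is_path_def by simp
    then have "(vs ! i, vs ! Suc i) \<in> adj F ends" unfolding adj_def by blast
    with Suc show ?case by (meson Suc_lessD rtrancl.rtrancl_into_rtrancl)
  qed simp
  have "(vs ! i, vs ! 0) \<in> (adj F ends)\<^sup>*"
    using from_hd[OF assms(2)] by (rule symD[OF sym_rtrancl[OF sym_adj]])
  then show ?thesis using from_hd[OF assms(3)] by (rule rtrancl_trans)
qed

lemma is_path_subset_component:
  assumes "is_path F ends vs es" "u \<in> set vs"
  shows "set vs \<subseteq> component F ends u"
proof
  fix w assume "w \<in> set vs"
  then obtain j where j: "j < length vs" "vs ! j = w" by (auto simp: in_set_conv_nth)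
  obtain i where i: "i < length vs" "vs ! i = u" using assms(2) by (auto simp: in_set_conv_nth)
  show "w \<in> component F ends u" using is_path_reach[OF assms(1) i(1) j(1)] i j
    unfolding component_def by simp
qed

lemma is_path_edge:
  assumes "is_path F ends vs es" "e \<in> set es"
  shows "e \<in> F \<and> ends e \<subseteq> set vs"
proof -
  obtain i where i: "i < length es" "es ! i = e" using assms(2) by (auto simp: in_set_conv_nth)
  have "length vs = Suc (length es)" using assms(1) unfolding is_path_def by simp
  then have "vs ! i \<in> set vs" "vs ! Suc i \<in> set vs" using i by auto
  then show ?thesis using assms(1) i unfolding is_path_def by auto
qed

lemma is_path_singleton: "is_path F ends [v] []"
  by (simp add: is_path_def)

lemma is_path_Cons:
  assumes "is_path F ends vs es" "e \<in> F" "ends e = {w, hd vs}" "w \<notin> set vs"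
  shows "is_path F ends (w # vs) (e # es)"
proof -
  have ne: "vs \<noteq> []" using assms(1) unfolding is_path_def by auto
  have "e \<notin> set es" using is_path_edge[OF assms(1)] assms(3,4) by blast
  with assms ne show ?thesis unfolding is_path_def
    apply (simp add: hd_conv_nth)
    apply (intro allI impI)
    subgoal for i by (cases i) (auto simp: hd_conv_nth)
    done
qed

lemma edge_subset_component:
  assumes "e \<in> F" "u \<in> ends e" "card (ends e) = 2"
  shows "ends e \<subseteq> component F ends u"
proof -
  obtain x y where "ends e = {x, y}" using assms(3) by (auto simp: card_2_iff)
  then obtain w where w: "ends e = {u, w}" using assms(2) by (auto simp: insert_commute)
  then have "(u, w) \<in> adj F ends" using assms(1) unfolding adj_def by blast
  then show ?thesis using w unfolding component_def by auto
qed

definition component_path :: "'v set \<Rightarrow> 'e set \<Rightarrow> ('e \<Rightarrow> 'v set) \<Rightarrow> nat \<Rightarrow>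
    ('v \<Rightarrow> 'v list \<times> 'e list) \<Rightarrow> 'v list \<times> 'e list \<Rightarrow> bool"
where
  "component_path V F ends k path_of P \<longleftrightarrow> is_path F ends (fst P) (snd P) \<and> length (snd P) \<le> k \<and>
     (\<forall>u\<in>set (fst P). u \<in> V \<and> path_of u = P)"

locale path_cover =
  fixes V :: "'v set" and F :: "'e set" and ends :: "'e \<Rightarrow> 'v set" and k :: nat
    and path_of :: "'v \<Rightarrow> 'v list \<times> 'e list"
  assumes component_path_of: "v \<in> V \<Longrightarrow> component_path V F ends k path_of (path_of v) \<and> v \<in> set (fst (path_of v))"
    and cover: "e \<in> F \<Longrightarrow> \<exists>v\<in>V. e \<in> set (snd (path_of v))"
begin

lemma is_path_path_of: "v \<in> V \<Longrightarrow> is_path F ends (fst (path_of v)) (snd (path_of v))"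
  using component_path_of unfolding component_path_def by blast

lemma path_of_eq: "v \<in> V \<Longrightarrow> u \<in> set (fst (path_of v)) \<Longrightarrow> path_of u = path_of v"
  using component_path_of unfolding component_path_def by blast

lemma edge_in_path_of:
  assumes "v \<in> V" "e \<in> F" "u \<in> ends e" "u \<in> set (fst (path_of v))"
  shows "e \<in> set (snd (path_of v)) \<and> ends e \<subseteq> set (fst (path_of v))"
proof -
  obtain v' where v': "v' \<in> V" "e \<in> set (snd (path_of v'))" using cover[OF assms(2)] by blast
  then have ends: "ends e \<subseteq> set (fst (path_of v'))" using is_path_edge[OF is_path_path_of] by blast
  then have "path_of u = path_of v'" using assms(3) by (intro path_of_eq[OF v'(1)]) blast
  moreover have "path_of u = path_of v" using path_of_eq[OF assms(1,4)] .
  ultimately show ?thesis using v'(2) ends by simp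
qed

lemma component_eq:
  assumes v: "v \<in> V"
  shows "component F ends v = set (fst (path_of v))"
proof
  show "set (fst (path_of v)) \<subseteq> component F ends v"
    using is_path_subset_component[OF is_path_path_of[OF v]] component_path_of[OF v] by blast
  show "component F ends v \<subseteq> set (fst (path_of v))"
  proof
    fix w assume "w \<in> component F ends v"
    then have "(v, w) \<in> (adj F ends)\<^sup>*" unfolding component_def by simp
    then show "w \<in> set (fst (path_of v))"
    proof (induction rule: rtrancl_induct)
      case base then show ?case using component_path_of[OF v] by simp
    next
      case (step u w)
      then obtain e where e: "e \<in> F" "ends e = {u, w}" unfolding adj_def by auto
      then show ?case using edge_in_path_of[OF v e(1) _ step.IH] by auto
    qed
  qed
qed

lemma edges_eq:
  assumes v: "v \<in> V"
  shows "set (snd (path_of v)) = {e \<in> F. ends e \<subseteq> component F ends v}"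
proof
  show "set (snd (path_of v)) \<subseteq> {e \<in> F. ends e \<subseteq> component F ends v}"
    using is_path_edge[OF is_path_path_of[OF v]] component_eq[OF v] by blast
  show "{e \<in> F. ends e \<subseteq> component F ends v} \<subseteq> set (snd (path_of v))"
  proof
    fix e assume "e \<in> {e \<in> F. ends e \<subseteq> component F ends v}"
    then have e: "e \<in> F" "ends e \<subseteq> set (fst (path_of v))" using component_eq[OF v] by auto
    obtain v' where v': "v' \<in> V" "e \<in> set (snd (path_of v'))" using cover[OF e(1)] by blast
    then obtain i where "i < length (snd (path_of v'))" "snd (path_of v') ! i = e"
      by (auto simp: in_set_conv_nth)
    then obtain u where "u \<in> ends e"
      using is_path_path_of[OF v'(1)] unfolding is_path_def by auto
    then show "e \<in> set (snd (path_of v))" using edge_in_path_of[OF v e(1)] e(2) by blast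
  qed
qed

lemma bounded_linear_forest: "bounded_linear_forest V F ends k"
  unfolding bounded_linear_forest_def
  using is_path_path_of component_path_of component_eq edges_eq unfolding component_path_def by blast

end

lemma bounded_linear_forestI:
  assumes "\<And>v. v \<in> V \<Longrightarrow> component_path V F ends k path_of (path_of v) \<and> v \<in> set (fst (path_of v))"
    and "\<And>e. e \<in> F \<Longrightarrow> \<exists>v\<in>V. e \<in> set (snd (path_of v))"
  shows "bounded_linear_forest V F ends k"
  using assms by (intro path_cover.bounded_linear_forest[of V F ends k path_of] path_cover.intro)

lemma bounded_linear_forest_path_length:
  assumes "bounded_linear_forest V F ends k" "is_path F ends vs es" "hd vs \<in> V"
  shows "length es \<le> k"
proof -
  obtain ces where c: "set ces = {e \<in> F. ends e \<subseteq> component F ends (hd vs)}" "length ces \<le> k"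
    using assms(1,3) unfolding bounded_linear_forest_def by blast
  have "vs \<noteq> []" using assms(2) unfolding is_path_def by auto
  then have "set vs \<subseteq> component F ends (hd vs)" using is_path_subset_component[OF assms(2)] by simp
  then have "set es \<subseteq> set ces" using is_path_edge[OF assms(2)] c(1) by blast
  then have "card (set es) \<le> card (set ces)" by (simp add: card_mono)
  also have "\<dots> \<le> length ces" by (rule card_length)
  finally show ?thesis using assms(2) c(2) distinct_card unfolding is_path_def by fastforce
qed

lemma bounded_linear_forest_vertex_path:
  assumes "bounded_linear_forest V F ends k" "u \<in> V"
  obtains vs es p where "is_path F ends vs es" "p < length vs" "vs ! p = u"
    "\<And>e. e \<in> F \<Longrightarrow> u \<in> ends e \<Longrightarrow> card (ends e) = 2 \<Longrightarrow> e \<in> set es"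
proof -
  obtain vs es where c: "is_path F ends vs es" "set vs = component F ends u"
    "set es = {e \<in> F. ends e \<subseteq> component F ends u}"
    using assms unfolding bounded_linear_forest_def by blast
  have "u \<in> set vs" using c(2) unfolding component_def by simp
  then obtain p where "p < length vs" "vs ! p = u" by (auto simp: in_set_conv_nth)
  moreover have "e \<in> set es" if "e \<in> F" "u \<in> ends e" "card (ends e) = 2" for e
    using edge_subset_component[of e F u ends] that c(3) by simp
  ultimately show ?thesis using that c(1) by blast
qed

lemma is_path_edge_position:
  assumes P: "is_path F ends vs es" and e: "e \<in> set es" and p: "p < length vs" "vs ! p \<in> ends e"
  shows "\<exists>i<length es. es ! i = e \<and> (i = p \<or> Suc i = p)"
proof -
  obtain i where i: "i < length es" "es ! i = e" using e by (auto simp: in_set_conv_nth)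
  have L: "length vs = Suc (length es)" and D: "distinct vs" using P unfolding is_path_def by auto
  have "ends e = {vs ! i, vs ! Suc i}" using P i unfolding is_path_def by auto
  then have "vs ! p = vs ! i \<or> vs ! p = vs ! Suc i" using p by auto
  then have "p = i \<or> p = Suc i" using D p(1) L i(1) nth_eq_iff_index_eq by (metis Suc_mono less_SucI)
  then show ?thesis using i by auto
qed

lemma bounded_linear_forest_degree_le_2:
  assumes B: "bounded_linear_forest V F ends k" and u: "u \<in> V"
    and e: "e1 \<in> F" "e2 \<in> F" "e3 \<in> F" "e1 \<noteq> e2" "e1 \<noteq> e3" "e2 \<noteq> e3"
    and U: "u \<in> ends e1" "u \<in> ends e2" "u \<in> ends e3"
    and c: "card (ends e1) = 2" "card (ends e2) = 2" "card (ends e3) = 2"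
  shows False
proof -
  obtain cvs ces p where P: "is_path F ends cvs ces" "p < length cvs" "cvs ! p = u"
    and I: "\<And>e. e \<in> F \<Longrightarrow> u \<in> ends e \<Longrightarrow> card (ends e) = 2 \<Longrightarrow> e \<in> set ces"
    using bounded_linear_forest_vertex_path[OF B u] by blast
  obtain i1 where i1: "ces ! i1 = e1" "i1 = p \<or> Suc i1 = p"
    using is_path_edge_position[OF P(1) I[OF e(1) U(1) c(1)] P(2)] P(3) U by blast
  obtain i2 where i2: "ces ! i2 = e2" "i2 = p \<or> Suc i2 = p"
    using is_path_edge_position[OF P(1) I[OF e(2) U(2) c(2)] P(2)] P(3) U by blast
  obtain i3 where i3: "ces ! i3 = e3" "i3 = p \<or> Suc i3 = p"
    using is_path_edge_position[OF P(1) I[OF e(3) U(3) c(3)] P(2)] P(3) U by blast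
  have "i1 \<noteq> i2" "i1 \<noteq> i3" "i2 \<noteq> i3" using i1 i2 i3 e by auto
  then show False using i1(2) i2(2) i3(2) by arith
qed

lemma bounded_linear_forest_no_parallel_edges:
  assumes B: "bounded_linear_forest V F ends k" and u: "u \<in> V"
    and e: "e1 \<in> F" "e2 \<in> F" "e1 \<noteq> e2" "ends e1 = ends e2"
    and U: "u \<in> ends e1" and c: "card (ends e1) = 2"
  shows False
proof -
  obtain cvs ces p where P: "is_path F ends cvs ces" "p < length cvs" "cvs ! p = u"
    and I: "\<And>e. e \<in> F \<Longrightarrow> u \<in> ends e \<Longrightarrow> card (ends e) = 2 \<Longrightarrow> e \<in> set ces"
    using bounded_linear_forest_vertex_path[OF B u] by blast
  obtain a b where ab: "ends e1 = {a, b}" "a \<noteq> b" using c unfolding card_2_iff by blast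
  have "\<exists>w. ends e1 = {u, w} \<and> u \<noteq> w" using ab U by auto
  then obtain w where w: "ends e1 = {u, w}" "u \<noteq> w" by blast
  have in1: "e1 \<in> set ces" "e2 \<in> set ces" using I e U c by auto
  have "w \<in> set cvs"
    using is_path_edge[OF P(1) in1(1)] w by auto
  then obtain q where q: "q < length cvs" "cvs ! q = w" by (auto simp: in_set_conv_nth)
  have pq: "p \<noteq> q" using P q w by auto
  obtain i1 where i1: "ces ! i1 = e1" "i1 = p \<or> Suc i1 = p" "i1 < length ces"
    using is_path_edge_position[OF P(1) in1(1) P(2)] P(3) U by blast
  obtain j1 where j1: "ces ! j1 = e1" "j1 = q \<or> Suc j1 = q" "j1 < length ces"
    using is_path_edge_position[OF P(1) in1(1) q(1)] q(2) w by blast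
  obtain i2 where i2: "ces ! i2 = e2" "i2 = p \<or> Suc i2 = p" "i2 < length ces"
    using is_path_edge_position[OF P(1) in1(2) P(2)] P(3) U e(4) by auto
  obtain j2 where j2: "ces ! j2 = e2" "j2 = q \<or> Suc j2 = q" "j2 < length ces"
    using is_path_edge_position[OF P(1) in1(2) q(1)] q(2) w e(4) by auto
  have D: "distinct ces" using P(1) unfolding is_path_def by auto
  have "i1 = j1" using D i1(1,3) j1(1,3) nth_eq_iff_index_eq by metis
  moreover have "i2 = j2" using D i2(1,3) j2(1,3) nth_eq_iff_index_eq by metis
  ultimately have "i1 = i2" using i1(2) i2(2) j1(2) j2(2) pq by arith
  then show False using i1 i2 e by simp
qed


section \<open>The gadget graph\<close>

declare upt_Suc[simp del]

lemma hd_map_upt[simp]: "a < b \<Longrightarrow> hd (map f [a..<b]) = f a"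
  by (simp add: upt_conv_Cons)

text \<open>Vertices and edges are natural numbers tagged with their kind by prod_encode. Hub i is
  the path hub i 0, hub i 1, hub i 2; tentacle t is the path spine t 0, ..., spine t (k - 1), whose
  j-th edge has the copy spine_edge t j 0 and, if it is doubled, also spine_edge t j 1. Tentacle t
  is attached at spine t 0 by two ports: tentacle 2i to hub i 1 and terminal i, tentacle 2i + 1 to
  hub i 2 and hub (i + 1) 0.\<close>

definition hub :: "nat \<Rightarrow> nat \<Rightarrow> nat" where "hub i r = prod_encode (0, prod_encode (i, r))"
definition terminal :: "nat \<Rightarrow> nat" where "terminal i = prod_encode (1, i)"
definition spine :: "nat \<Rightarrow> nat \<Rightarrow> nat" where "spine t j = prod_encode (2, prod_encode (t, j))"

definition hub_edge :: "nat \<Rightarrow> nat \<Rightarrow> nat" where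
  "hub_edge i r = prod_encode (0, prod_encode (i, r))"
definition port :: "nat \<Rightarrow> nat \<Rightarrow> nat" where
  "port t s = prod_encode (1, prod_encode (t, s))"
definition spine_edge :: "nat \<Rightarrow> nat \<Rightarrow> nat \<Rightarrow> nat" where
  "spine_edge t j c = prod_encode (2, prod_encode (t, prod_encode (j, c)))"

lemma vertex_code_eq[simp]:
  "hub i r = hub i' r' \<longleftrightarrow> i = i' \<and> r = r'" "terminal i = terminal i' \<longleftrightarrow> i = i'"
  "spine t j = spine t' j' \<longleftrightarrow> t = t' \<and> j = j'"
  "hub i r \<noteq> terminal i'" "terminal i' \<noteq> hub i r" "hub i r \<noteq> spine t j" "spine t j \<noteq> hub i r"
  "terminal i \<noteq> spine t j" "spine t j \<noteq> terminal i"
  by (auto simp: hub_def terminal_def spine_def)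

lemma edge_code_eq[simp]:
  "hub_edge i r = hub_edge i' r' \<longleftrightarrow> i = i' \<and> r = r'" "port t s = port t' s' \<longleftrightarrow> t = t' \<and> s = s'"
  "spine_edge t j c = spine_edge t' j' c' \<longleftrightarrow> t = t' \<and> j = j' \<and> c = c'"
  "hub_edge i r \<noteq> port t s" "port t s \<noteq> hub_edge i r"
  "hub_edge i r \<noteq> spine_edge t j c" "spine_edge t j c \<noteq> hub_edge i r"
  "port t s \<noteq> spine_edge t' j c" "spine_edge t' j c \<noteq> port t s"
  by (auto simp: hub_edge_def port_def spine_edge_def)

definition port_end :: "nat \<Rightarrow> nat \<Rightarrow> nat" where
  "port_end t s = (if s = 0 then (if even t then hub (t div 2) 1 else hub (t div 2) 2)
     else (if even t then terminal (t div 2) else hub (Suc (t div 2)) 0))"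

lemma port_end_neq_spine[simp]: "port_end t s \<noteq> spine t' j" "spine t' j \<noteq> port_end t s"
  by (auto simp: port_end_def)

definition gadget_ends :: "nat \<Rightarrow> nat set" where
  "gadget_ends e = (case prod_decode e of
      (0, z) \<Rightarrow> (case prod_decode z of (i, r) \<Rightarrow> {hub i r, hub i (Suc r)})
    | (Suc 0, z) \<Rightarrow> (case prod_decode z of (t, s) \<Rightarrow> {spine t 0, port_end t s})
    | (_, z) \<Rightarrow> (case prod_decode z of (t, w) \<Rightarrow>
        (case prod_decode w of (j, c) \<Rightarrow> {spine t (j - 1), spine t j})))"

lemma gadget_ends_simps[simp]:
  "gadget_ends (hub_edge i r) = {hub i r, hub i (Suc r)}"
  "gadget_ends (port t s) = {spine t 0, port_end t s}"
  "gadget_ends (spine_edge t j c) = {spine t (j - 1), spine t j}"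
  by (simp_all add: gadget_ends_def hub_edge_def port_def spine_edge_def prod_encode_inverse
      numeral_2_eq_2)

definition vertex_case ::
  "(nat \<Rightarrow> nat \<Rightarrow> 'a) \<Rightarrow> (nat \<Rightarrow> 'a) \<Rightarrow> (nat \<Rightarrow> nat \<Rightarrow> 'a) \<Rightarrow> nat \<Rightarrow> 'a" where
  "vertex_case fH fT fS v = (case prod_decode v of
      (0, z) \<Rightarrow> (case prod_decode z of (i, r) \<Rightarrow> fH i r)
    | (Suc 0, z) \<Rightarrow> fT z
    | (_, z) \<Rightarrow> (case prod_decode z of (t, j) \<Rightarrow> fS t j))"

lemma vertex_case_simps[simp]:
  "vertex_case fH fT fS (hub i r) = fH i r"
  "vertex_case fH fT fS (terminal i) = fT i"
  "vertex_case fH fT fS (spine t j) = fS t j"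
  by (simp_all add: vertex_case_def hub_def terminal_def spine_def prod_encode_inverse
      numeral_2_eq_2)

lemma is_path_hub_path:
  "hub_edge i 0 \<in> L \<Longrightarrow> hub_edge i 1 \<in> L \<Longrightarrow>
     is_path L gadget_ends [hub i 0, hub i 1, hub i 2] [hub_edge i 0, hub_edge i 1]"
  unfolding is_path_def by (auto simp: less_Suc_eq numeral_2_eq_2)

lemma is_path_spine_segment:
  assumes "a \<le> b"
    and "\<And>j. a < j \<Longrightarrow> j \<le> b \<Longrightarrow> sel j \<in> L \<and> (sel j = spine_edge t j 0 \<or> sel j = spine_edge t j 1)"
  shows "is_path L gadget_ends (map (spine t) [a..<Suc b]) (map sel [Suc a..<Suc b])"
proof -
  have "inj_on sel {Suc a..<Suc b}"
  proof (rule inj_onI)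
    fix x y assume "x \<in> {Suc a..<Suc b}" "y \<in> {Suc a..<Suc b}" "sel x = sel y"
    then show "x = y" using assms(2)[of x] assms(2)[of y] by auto
  qed
  then have distinct: "distinct (map (spine t) [a..<Suc b])" "distinct (map sel [Suc a..<Suc b])"
    by (simp_all add: distinct_map inj_on_def)
  have "map sel [Suc a..<Suc b] ! i \<in> L \<and> gadget_ends (map sel [Suc a..<Suc b] ! i) =
      {map (spine t) [a..<Suc b] ! i, map (spine t) [a..<Suc b] ! Suc i}"
    if "i < length (map sel [Suc a..<Suc b])" for i
  proof -
    have "a < Suc a + i" "Suc a + i \<le> b" using that by auto
    then show ?thesis using assms(2)[of "Suc a + i"] that by auto
  qed
  then show ?thesis unfolding is_path_def using assms(1) distinct by auto
qed

locale gadget_graph =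
  fixes k l n :: nat
  assumes l_ge_2: "2 \<le> l" and l_le_k: "l \<le> k" and n_pos: "1 \<le> n"
begin

text \<open>Spine edge j is single iff j = l (mod l + 1): in the l-bounded side, a single edge
  together with the copies of the l doubled edges before it would form a path of length l + 1.\<close>

definition doubled :: "nat \<Rightarrow> bool" where "doubled j \<longleftrightarrow> j mod Suc l \<noteq> l"

definition tentacles :: nat where "tentacles = 2 * n - 1"

definition V :: "nat set" where
  "V = (\<lambda>(i, r). hub i r) ` ({..<n} \<times> {..<3}) \<union> terminal ` {..<n}
     \<union> (\<lambda>(t, j). spine t j) ` ({..<tentacles} \<times> {..<k})"

definition E :: "nat set" where
  "E = (\<lambda>(i, r). hub_edge i r) ` ({..<n} \<times> {..<2}) \<union> (\<lambda>(t, s). port t s) ` ({..<tentacles} \<times> {..<2})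
     \<union> (\<lambda>(t, j). spine_edge t j 0) ` ({..<tentacles} \<times> {0<..<k})
     \<union> (\<lambda>(t, j). spine_edge t j 1) ` ({..<tentacles} \<times> {j \<in> {0<..<k}. doubled j})"

definition A :: "nat set" where "A = terminal ` {i. i < n \<and> even i}"

lemma V_mem[simp]:
  "hub i r \<in> V \<longleftrightarrow> i < n \<and> r < 3" "terminal i \<in> V \<longleftrightarrow> i < n"
  "spine t j \<in> V \<longleftrightarrow> t < tentacles \<and> j < k"
  unfolding V_def by auto

lemma E_mem[simp]:
  "hub_edge i r \<in> E \<longleftrightarrow> i < n \<and> r < 2" "port t s \<in> E \<longleftrightarrow> t < tentacles \<and> s < 2"
  "spine_edge t j c \<in> E \<longleftrightarrow> t < tentacles \<and> 0 < j \<and> j < k \<and> (c = 0 \<or> c = 1 \<and> doubled j)"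
  unfolding E_def by auto

lemma V_cases:
  assumes "v \<in> V"
  obtains (hub) i r where "v = hub i r" "i < n" "r < 3"
    | (terminal) i where "v = terminal i" "i < n"
    | (spine) t j where "v = spine t j" "t < tentacles" "j < k"
  using assms unfolding V_def by auto

lemma E_cases:
  assumes "e \<in> E"
  obtains (hub) i r where "e = hub_edge i r" "i < n" "r < 2"
    | (port) t s where "e = port t s" "t < tentacles" "s < 2"
    | (single) t j where "e = spine_edge t j 0" "t < tentacles" "0 < j" "j < k"
    | (double) t j where "e = spine_edge t j 1" "t < tentacles" "0 < j" "j < k" "doubled j"
  using assms unfolding E_def by auto

lemma k_ge_2: "2 \<le> k" using l_ge_2 l_le_k by simp

lemma doubled_below: "0 < j \<Longrightarrow> j < l \<Longrightarrow> doubled j"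
  by (simp add: doubled_def)

lemma tentacle_index_bounds: "i < n \<Longrightarrow> 2 * i < tentacles" "Suc i < n \<Longrightarrow> Suc (2 * i) < tentacles"
  by (auto simp: tentacles_def)

lemma port_end_in_V: "t < tentacles \<Longrightarrow> s < 2 \<Longrightarrow> port_end t s \<in> V"
  using n_pos by (auto simp: port_end_def tentacles_def elim!: oddE)

lemma card_gadget_ends: "e \<in> E \<Longrightarrow> card (gadget_ends e) = 2"
  by (induction rule: E_cases) (auto simp: port_end_def)

lemma multigraph: "multigraph V E gadget_ends"
proof -
  have "gadget_ends e \<subseteq> V" if "e \<in> E" for e
    using that by (induction rule: E_cases) (use port_end_in_V k_ge_2 in auto)
  then show ?thesis unfolding multigraph_def using card_gadget_ends by (auto simp: V_def E_def)
qed

lemma is_path_tentacle: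
  assumes "port t s \<in> L" "0 < b"
    and "\<And>j. 0 < j \<Longrightarrow> j < b \<Longrightarrow> sel j \<in> L \<and> (sel j = spine_edge t j 0 \<or> sel j = spine_edge t j 1)"
  shows "is_path L gadget_ends (port_end t s # map (spine t) [0..<b]) (port t s # map sel [1..<b])"
proof -
  have "is_path L gadget_ends (map (spine t) [0..<Suc (b - 1)]) (map sel [Suc 0..<Suc (b - 1)])"
    by (rule is_path_spine_segment) (use assms(3) in auto)
  then have spine: "is_path L gadget_ends (map (spine t) [0..<b]) (map sel [1..<b])"
    using assms(2) by simp
  show ?thesis
  proof (rule is_path_Cons[OF spine assms(1)])
    show "gadget_ends (port t s) = {port_end t s, hd (map (spine t) [0..<b])}"
      using assms(2) by (simp add: insert_commute)
    show "port_end t s \<notin> set (map (spine t) [0..<b])" by auto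
  qed
qed

lemma ports_not_both_in_forest:
  assumes "bounded_linear_forest V L gadget_ends b" "t < tentacles"
    and "port t 0 \<in> L" "port t 1 \<in> L" "spine_edge t 1 c \<in> L"
  shows False
proof (rule bounded_linear_forest_degree_le_2[OF assms(1) _ assms(3-5)])
  show "spine t 0 \<in> V" using assms(2) k_ge_2 by simp
qed (simp_all add: card_insert_if)

end

section \<open>The structure forced in every decomposition\<close>

lemma last_residue_gap:
  assumes "j mod Suc l = l" "j - l \<le> j'" "j' < j"
  shows "j' mod Suc l \<noteq> l"
proof
  assume "j' mod Suc l = l"
  then have "j mod Suc l = j' mod Suc l" using assms(1) by simp
  then have "Suc l dvd j - j'" using assms(3) by (simp add: mod_eq_dvd_iff_nat)
  moreover have "0 < j - j'" "j - j' \<le> l" using assms by auto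
  ultimately show False using dvd_imp_le[of "Suc l" "j - j'"] by simp
qed

locale gadget_decomposition = gadget_graph +
  fixes F :: "nat set"
  assumes decomposition: "bounded_lfd V E gadget_ends k l F"
begin

lemma forest_F: "bounded_linear_forest V F gadget_ends k"
  and forest_G: "bounded_linear_forest V (E - F) gadget_ends l"
  using decomposition unfolding bounded_lfd_def by auto

lemma doubled_edges_split:
  assumes "t < tentacles" "0 < j" "j < k" "doubled j"
  shows "spine_edge t j 0 \<in> F \<longleftrightarrow> spine_edge t j 1 \<notin> F"
proof -
  have u: "spine t j \<in> V" using assms by simp
  have c: "card (gadget_ends (spine_edge t j 0)) = 2" using assms card_gadget_ends by simp
  have U: "spine t j \<in> gadget_ends (spine_edge t j 0)" by simp
  have eq: "gadget_ends (spine_edge t j 0) = gadget_ends (spine_edge t j 1)" by simp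
  show ?thesis
  proof
    assume "spine_edge t j 0 \<in> F"
    then show "spine_edge t j 1 \<notin> F"
      using bounded_linear_forest_no_parallel_edges[OF forest_F u _ _ _ eq U c] by auto
  next
    assume "spine_edge t j 1 \<notin> F"
    then show "spine_edge t j 0 \<in> F"
      using bounded_linear_forest_no_parallel_edges[OF forest_G u _ _ _ eq U c] assms by auto
  qed
qed

lemma ports_split:
  assumes t: "t < tentacles"
  shows "port t 0 \<in> F \<longleftrightarrow> port t 1 \<notin> F"
proof -
  have "0 < (1::nat)" "1 < k" "doubled 1" using k_ge_2 l_ge_2 doubled_below by auto
  then have copies: "spine_edge t 1 0 \<in> F \<longleftrightarrow> spine_edge t 1 1 \<notin> F" "spine_edge t 1 1 \<in> E"
    using doubled_edges_split[OF t] t by auto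
  show ?thesis
  proof (cases "spine_edge t 1 0 \<in> F")
    case True
    then show ?thesis
      using ports_not_both_in_forest[OF forest_F t, of 0] copies
        ports_not_both_in_forest[OF forest_G t, of 1] t by auto
  next
    case False
    then show ?thesis
      using ports_not_both_in_forest[OF forest_F t, of 1] copies
        ports_not_both_in_forest[OF forest_G t, of 0] t by auto
  qed
qed

definition strand_F :: "nat \<Rightarrow> nat \<Rightarrow> nat" where
  "strand_F t j = (if spine_edge t j 0 \<in> F then spine_edge t j 0 else spine_edge t j 1)"

definition strand_G :: "nat \<Rightarrow> nat \<Rightarrow> nat" where
  "strand_G t j = (if spine_edge t j 0 \<in> F then spine_edge t j 1 else spine_edge t j 0)"

lemma strand_G_in_G:
  assumes "t < tentacles" "0 < j" "j < k" "doubled j"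
  shows "strand_G t j \<in> E - F \<and> (strand_G t j = spine_edge t j 0 \<or> strand_G t j = spine_edge t j 1)"
  using doubled_edges_split[OF assms] assms by (auto simp: strand_G_def)

lemma single_edge_in_F:
  assumes t: "t < tentacles" and j: "0 < j" "j < k" and single: "\<not> doubled j"
  shows "spine_edge t j 0 \<in> F"
proof (rule ccontr)
  assume "spine_edge t j 0 \<notin> F"
  then have last: "strand_G t j \<in> E - F \<and> strand_G t j = spine_edge t j 0"
    using t j by (simp add: strand_G_def)
  have j_mod: "j mod Suc l = l" using single by (simp add: doubled_def)
  have strands: "strand_G t j' \<in> E - F \<and> (strand_G t j' = spine_edge t j' 0 \<or> strand_G t j' = spine_edge t j' 1)"
    if "j - l \<le> j'" "j' \<le> j" "0 < j'" for j'
  proof (cases "j' = j")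
    case False
    then have "doubled j'" using last_residue_gap[OF j_mod] that by (simp add: doubled_def)
    then show ?thesis using strand_G_in_G[OF t] that j by simp
  qed (use last in auto)
  show False
  proof (cases "j = l")
    case True
    obtain s where s: "s < 2" "port t s \<notin> F"
      using ports_split[OF t] that by (cases "port t 0 \<in> F") fastforce+
    have "is_path (E - F) gadget_ends (port_end t s # map (spine t) [0..<Suc l])
        (port t s # map (strand_G t) [1..<Suc l])"
      by (rule is_path_tentacle) (use s t True strands in auto)
    from bounded_linear_forest_path_length[OF forest_G this] show False
      using port_end_in_V[OF t s(1)] by simp
  next
    case False
    then have "l < j" using j_mod by (metis mod_less_eq_dividend nat_less_le)
    have "is_path (E - F) gadget_ends (map (spine t) [j - Suc l..<Suc j])
        (map (strand_G t) [Suc (j - Suc l)..<Suc j])"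
      by (rule is_path_spine_segment) (use \<open>l < j\<close> strands in auto)
    from bounded_linear_forest_path_length[OF forest_G this] show False
      using t j \<open>l < j\<close> less_imp_diff_less[OF j(2)] by simp
  qed
qed

lemma strand_F_in_F:
  assumes "t < tentacles" "0 < j" "j < k"
  shows "strand_F t j \<in> F \<and> (strand_F t j = spine_edge t j 0 \<or> strand_F t j = spine_edge t j 1)"
  using single_edge_in_F[OF assms] doubled_edges_split[OF assms] by (auto simp: strand_F_def)

lemma tentacle_path_in_F:
  assumes "t < tentacles" "port t s \<in> F"
  shows "is_path F gadget_ends (port_end t s # map (spine t) [0..<k]) (port t s # map (strand_F t) [1..<k])"
  by (rule is_path_tentacle) (use assms strand_F_in_F k_ge_2 in auto)

lemma tentacle_path_in_G:
  assumes "t < tentacles" "port t s \<notin> F" "s < 2"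
  shows "is_path (E - F) gadget_ends (port_end t s # map (spine t) [0..<l])
    (port t s # map (strand_G t) [1..<l])"
  by (rule is_path_tentacle) (use assms strand_G_in_G doubled_below l_le_k l_ge_2 in auto)

text \<open>The tentacle already fills the bound of the side containing its port.\<close>

lemma port_end_edge_opposite:
  assumes t: "t < tentacles" and s: "s < 2" and e: "e \<in> E" "gadget_ends e = {port_end t s, w}"
    and w: "w \<in> V" "w \<noteq> port_end t s" "\<And>j. w \<noteq> spine t j"
  shows "e \<in> F \<longleftrightarrow> port t s \<notin> F"
proof
  assume "e \<in> F"
  show "port t s \<notin> F"
  proof
    assume "port t s \<in> F"
    have "is_path F gadget_ends (w # port_end t s # map (spine t) [0..<k])
        (e # port t s # map (strand_F t) [1..<k])"
      by (rule is_path_Cons[OF tentacle_path_in_F[OF t \<open>port t s \<in> F\<close>] \<open>e \<in> F\<close>])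
        (use e(2) w in \<open>auto simp: insert_commute\<close>)
    from bounded_linear_forest_path_length[OF forest_F this] show False using w k_ge_2 by simp
  qed
next
  assume "port t s \<notin> F"
  show "e \<in> F"
  proof (rule ccontr)
    assume "e \<notin> F"
    have "is_path (E - F) gadget_ends (w # port_end t s # map (spine t) [0..<l])
        (e # port t s # map (strand_G t) [1..<l])"
      by (rule is_path_Cons[OF tentacle_path_in_G[OF t \<open>port t s \<notin> F\<close> s]])
        (use e w \<open>e \<notin> F\<close> in \<open>auto simp: insert_commute\<close>)
    from bounded_linear_forest_path_length[OF forest_G this] show False using w l_ge_2 by simp
  qed
qed

definition middle_port_in_F :: "nat \<Rightarrow> bool" where
  "middle_port_in_F i \<longleftrightarrow> port (2 * i) 0 \<in> F"

lemma hub_edges_in_F: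
  assumes i: "i < n"
  shows "hub_edge i 0 \<in> F \<longleftrightarrow> \<not> middle_port_in_F i" "hub_edge i 1 \<in> F \<longleftrightarrow> \<not> middle_port_in_F i"
proof -
  have t: "2 * i < tentacles" using tentacle_index_bounds i by simp
  have "port_end (2 * i) 0 = hub i 1" by (simp add: port_end_def)
  then have "hub_edge i 0 \<in> F \<longleftrightarrow> port (2 * i) 0 \<notin> F"
    by (intro port_end_edge_opposite[OF t, of 0 _ "hub i 0"]) (use i in \<open>auto simp: insert_commute\<close>)
  moreover have "hub_edge i 1 \<in> F \<longleftrightarrow> port (2 * i) 0 \<notin> F"
    using \<open>port_end (2 * i) 0 = hub i 1\<close>
    by (intro port_end_edge_opposite[OF t, of 0 _ "hub i 2"]) (use i in \<open>auto simp: numeral_2_eq_2\<close>)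
  ultimately show "hub_edge i 0 \<in> F \<longleftrightarrow> \<not> middle_port_in_F i" "hub_edge i 1 \<in> F \<longleftrightarrow> \<not> middle_port_in_F i"
    unfolding middle_port_in_F_def by simp_all
qed

lemma middle_port_in_F_Suc:
  assumes i: "Suc i < n"
  shows "middle_port_in_F (Suc i) \<longleftrightarrow> \<not> middle_port_in_F i"
proof -
  have t: "Suc (2 * i) < tentacles" using tentacle_index_bounds i by simp
  have "port_end (Suc (2 * i)) 0 = hub i 2" "port_end (Suc (2 * i)) 1 = hub (Suc i) 0"
    by (simp_all add: port_end_def)
  then have "hub_edge i 1 \<in> F \<longleftrightarrow> port (Suc (2 * i)) 0 \<notin> F"
      "hub_edge (Suc i) 0 \<in> F \<longleftrightarrow> port (Suc (2 * i)) 1 \<notin> F"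
    by (intro port_end_edge_opposite[OF t, of 0 _ "hub i 1"] port_end_edge_opposite[OF t, of 1 _ "hub (Suc i) 1"];
        use i in \<open>auto simp: insert_commute numeral_2_eq_2\<close>)+
  then show ?thesis using ports_split[OF t] hub_edges_in_F[of i] hub_edges_in_F[of "Suc i"] i by auto
qed

lemma middle_port_in_F_even: "2 * j < n \<Longrightarrow> middle_port_in_F (2 * j) \<longleftrightarrow> middle_port_in_F 0"
  by (induction j) (use middle_port_in_F_Suc in force)+

lemma terminal_port_in_F:
  assumes "i < n" "even i"
  shows "port (2 * i) 1 \<in> F \<longleftrightarrow> \<not> middle_port_in_F 0"
  using ports_split[OF tentacle_index_bounds(1)[OF assms(1)]] middle_port_in_F_even[of "i div 2"] assms
  by (auto simp: middle_port_in_F_def)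

lemma terminals_covered_F: "\<not> middle_port_in_F 0 \<Longrightarrow> covered A k F gadget_ends"
  using tentacle_path_in_F[OF tentacle_index_bounds(1)] terminal_port_in_F k_ge_2
  unfolding covered_def A_def by (fastforce simp: port_end_def)

lemma terminals_covered_G: "middle_port_in_F 0 \<Longrightarrow> covered A l (E - F) gadget_ends"
  using tentacle_path_in_G[OF tentacle_index_bounds(1)] terminal_port_in_F l_ge_2
  unfolding covered_def A_def by (fastforce simp: port_end_def)

end

section \<open>Two decompositions\<close>

lemma Suc_div_Suc_eqI:
  assumes "1 \<le> m" "m * Suc l - 1 \<le> j" "j < m * Suc l + l"
  shows "Suc j div Suc l = m"
proof (rule div_nat_eqI)
  have "1 \<le> m * Suc l" using assms(1) by simp
  then show "Suc l * m \<le> Suc j" using assms(2) by (simp add: mult.commute)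
  show "Suc j < Suc l * Suc m" using assms(3) by (simp add: algebra_simps)
qed

lemma Suc_div_Suc_bounds:
  assumes "l \<le> j"
  shows "1 \<le> Suc j div Suc l" "Suc j div Suc l * Suc l - 1 \<le> j" "j < Suc j div Suc l * Suc l + l"
proof -
  have d: "Suc j = Suc j div Suc l * Suc l + Suc j mod Suc l" by (rule div_mult_mod_eq[symmetric])
  have "Suc j mod Suc l < Suc l" by simp
  then show "Suc j div Suc l * Suc l - 1 \<le> j" "j < Suc j div Suc l * Suc l + l" using d by linarith+
  show "1 \<le> Suc j div Suc l" using assms by (simp add: div_greater_zero_iff Suc_le_eq del: div_Suc)
qed

lemma Suc_div_Suc_bounds_nonresidue:
  assumes "j mod Suc l \<noteq> l" "l \<le> j"
  shows "Suc j div Suc l * Suc l \<le> j"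
proof -
  have d: "j = j div Suc l * Suc l + j mod Suc l" by (rule div_mult_mod_eq[symmetric])
  have "j mod Suc l < l" using assms(1) mod_less_divisor[of "Suc l" j] by linarith
  then have "Suc j div Suc l = j div Suc l" by (intro div_nat_eqI) (use d in \<open>auto simp: algebra_simps\<close>)
  then show ?thesis by (metis div_times_less_eq_dividend)
qed

lemma mod_Suc_mult_add: "d < l \<Longrightarrow> (m * Suc l + d) mod Suc l = d"
  by (metis add.commute mod_mult_self1 mod_less less_SucI)

text \<open>The parameter q selects one of the two phases of the alternation of the hubs
  (middle_port_in_F_Suc); the witnesses realise both.\<close>

definition hub_in_G :: "bool \<Rightarrow> nat \<Rightarrow> bool" where
  "hub_in_G q i \<longleftrightarrow> (q \<longleftrightarrow> even i)"

definition port_F :: "bool \<Rightarrow> nat \<Rightarrow> nat" where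
  "port_F q t = (if hub_in_G q (t div 2) then 0 else 1)"

lemma hub_in_G_Not[simp]: "hub_in_G (\<not> q) i \<longleftrightarrow> \<not> hub_in_G q i"
  by (auto simp: hub_in_G_def)

lemma port_F_less_2: "port_F q t < 2"
  by (simp add: port_F_def)

lemma port_F_Not: "port_F (\<not> q) t = 1 - port_F q t"
  by (simp add: port_F_def)

lemma port_F_Not_neq[simp]: "port_F (\<not> q) t \<noteq> port_F q t"
  by (simp add: port_F_def)

lemma port_end_hub_in_G: "port_end t (port_F q t) = hub i r \<Longrightarrow> hub_in_G q i"
  by (cases "even t") (auto simp: port_end_def port_F_def hub_in_G_def split: if_splits)

lemma eq_if_same_parity_div_2: "even t \<longleftrightarrow> even t' \<Longrightarrow> t div 2 = t' div 2 \<Longrightarrow> t = (t'::nat)"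
  by (metis div_mult_mod_eq odd_iff_mod_2_eq_one even_iff_mod_2_eq_zero)

lemma port_end_eq_iff:
  assumes "s < 2" "s' < 2"
  shows "port_end t s = port_end t' s' \<longleftrightarrow> t = t' \<and> s = s'"
proof
  assume eq: "port_end t s = port_end t' s'"
  then have "s = s' \<and> (even t \<longleftrightarrow> even t') \<and> t div 2 = t' div 2"
    using assms by (auto simp: port_end_def less_2_cases_iff split: if_splits)
  then show "t = t' \<and> s = s'" using eq_if_same_parity_div_2 by blast
qed simp

definition hub_path :: "nat \<Rightarrow> nat list \<times> nat list" where
  "hub_path i = ([hub i 0, hub i 1, hub i 2], [hub_edge i 0, hub_edge i 1])"

definition tentacle_path :: "nat \<Rightarrow> nat \<Rightarrow> nat \<Rightarrow> nat \<Rightarrow> nat list \<times> nat list" where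
  "tentacle_path t s b c = (port_end t s # map (spine t) [0..<b], port t s # map (\<lambda>j. spine_edge t j c) [1..<b])"

context gadget_graph
begin

definition witness :: "bool \<Rightarrow> nat set" where
  "witness q = (\<lambda>(i, r). hub_edge i r) ` {(i, r). i < n \<and> r < 2 \<and> \<not> hub_in_G q i}
     \<union> (\<lambda>t. port t (port_F q t)) ` {..<tentacles} \<union> (\<lambda>(t, j). spine_edge t j 0) ` ({..<tentacles} \<times> {0<..<k})"

lemma witness_mem[simp]:
  "hub_edge i r \<in> witness q \<longleftrightarrow> i < n \<and> r < 2 \<and> \<not> hub_in_G q i"
  "port t s \<in> witness q \<longleftrightarrow> t < tentacles \<and> s = port_F q t"
  "spine_edge t j c \<in> witness q \<longleftrightarrow> t < tentacles \<and> 0 < j \<and> j < k \<and> c = 0"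
  unfolding witness_def by auto

lemma witness_complement_mem[simp]:
  "hub_edge i r \<in> E - witness q \<longleftrightarrow> i < n \<and> r < 2 \<and> hub_in_G q i"
  "port t s \<in> E - witness q \<longleftrightarrow> t < tentacles \<and> s = port_F (\<not> q) t"
  "spine_edge t j c \<in> E - witness q \<longleftrightarrow> t < tentacles \<and> 0 < j \<and> j < k \<and> c = 1 \<and> doubled j"
  by (auto simp: port_F_def hub_in_G_def)

lemma witness_subset: "witness q \<subseteq> E"
  unfolding witness_def using port_F_less_2 by auto

text \<open>A vertex outside the tentacles lies on the hub path of its hub, or is the end of at most one
  port in the side considered, in which case it belongs to that tentacle's path.\<close>

definition attached_path :: "bool \<Rightarrow> (nat \<Rightarrow> nat list \<times> nat list) \<Rightarrow> nat \<Rightarrow> nat list \<times> nat list" where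
  "attached_path q tent v = (if \<exists>t<tentacles. port_end t (port_F q t) = v
     then tent (THE t. t < tentacles \<and> port_end t (port_F q t) = v) else ([v], []))"

definition side_path ::
  "bool \<Rightarrow> (nat \<Rightarrow> nat list \<times> nat list) \<Rightarrow> (nat \<Rightarrow> nat \<Rightarrow> nat list \<times> nat list) \<Rightarrow> nat \<Rightarrow> nat list \<times> nat list"
where
  "side_path q tent spine_path = vertex_case
     (\<lambda>i r. if hub_in_G q i then attached_path q tent (hub i r) else hub_path i)
     (\<lambda>i. attached_path q tent (terminal i)) spine_path"

lemma attached_path_port_end:
  assumes "t < tentacles"
  shows "attached_path q tent (port_end t (port_F q t)) = tent t"
proof -
  have "(THE t'. t' < tentacles \<and> port_end t' (port_F q t') = port_end t (port_F q t)) = t"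
    using assms port_end_eq_iff[OF port_F_less_2 port_F_less_2] by (intro the_equality) auto
  then show ?thesis using assms unfolding attached_path_def by auto
qed

lemma side_path_port_end:
  assumes "t < tentacles"
  shows "side_path q tent sp (port_end t (port_F q t)) = tent t"
proof (cases "\<exists>i r. port_end t (port_F q t) = hub i r")
  case True
  then obtain i r where "port_end t (port_F q t) = hub i r" by blast
  with port_end_hub_in_G[OF this] show ?thesis
    using attached_path_port_end[OF assms, of q tent] by (simp add: side_path_def)
next
  case False
  then obtain i where "port_end t (port_F q t) = terminal i" by (auto simp: port_end_def split: if_splits)
  with attached_path_port_end[OF assms, of q tent] show ?thesis by (simp add: side_path_def)
qed

lemma component_path_side_path:
  assumes tent: "\<And>t. t < tentacles \<Longrightarrow> component_path V L gadget_ends b (side_path q tent sp) (tent t)"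
    and port_end_in_tent: "\<And>t. port_end t (port_F q t) \<in> set (fst (tent t))"
    and hubs: "\<And>i r. i < n \<Longrightarrow> r < 2 \<Longrightarrow> \<not> hub_in_G q i \<Longrightarrow> hub_edge i r \<in> L"
    and "2 \<le> b" and v: "v \<in> V" "\<And>t j. v \<noteq> spine t j"
  shows "component_path V L gadget_ends b (side_path q tent sp) (side_path q tent sp v)
    \<and> v \<in> set (fst (side_path q tent sp v))"
proof -
  let ?P = "side_path q tent sp"
  have attached: ?thesis if "?P v = attached_path q tent v"
  proof (cases "\<exists>t<tentacles. port_end t (port_F q t) = v")
    case True
    then obtain t where "t < tentacles" "v = port_end t (port_F q t)" by auto
    then show ?thesis using tent port_end_in_tent side_path_port_end by simp
  next
    case False
    then have "attached_path q tent v = ([v], [])"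
      unfolding attached_path_def by (rule if_not_P)
    then show ?thesis
      using that v(1) is_path_singleton unfolding component_path_def by simp
  qed
  from v(1) show ?thesis
  proof (cases rule: V_cases)
    case (hub i r)
    show ?thesis
    proof (cases "hub_in_G q i")
      case True
      then show ?thesis using hub by (intro attached) (simp add: side_path_def)
    next
      case False
      have "is_path L gadget_ends [hub i 0, hub i 1, hub i 2] [hub_edge i 0, hub_edge i 1]"
        using hubs hub(2) False by (intro is_path_hub_path) auto
      then show ?thesis using hub False \<open>2 \<le> b\<close>
        by (auto simp: component_path_def side_path_def hub_path_def less_Suc_eq numeral_3_eq_3)
    qed
  next
    case (terminal i)
    then show ?thesis by (intro attached) (simp add: side_path_def)
  qed (use v(2) in auto)
qed

definition path_F :: "bool \<Rightarrow> nat \<Rightarrow> nat list \<times> nat list" where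
  "path_F q = side_path q (\<lambda>t. tentacle_path t (port_F q t) k 0) (\<lambda>t j. tentacle_path t (port_F q t) k 0)"

lemma component_path_tentacle_F:
  assumes t: "t < tentacles"
  shows "component_path V (witness q) gadget_ends k (path_F q) (tentacle_path t (port_F q t) k 0)"
  unfolding component_path_def
proof (intro conjI)
  show "is_path (witness q) gadget_ends (fst (tentacle_path t (port_F q t) k 0))
      (snd (tentacle_path t (port_F q t) k 0))"
    unfolding tentacle_path_def fst_conv snd_conv by (rule is_path_tentacle) (use t k_ge_2 in auto)
  show "\<forall>u\<in>set (fst (tentacle_path t (port_F q t) k 0)). u \<in> V \<and> path_F q u = tentacle_path t (port_F q t) k 0"
  proof -
    have "path_F q (port_end t (port_F q t)) = tentacle_path t (port_F q t) k 0"
      unfolding path_F_def by (rule side_path_port_end[OF t])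
    then show ?thesis using t port_end_in_V[OF t port_F_less_2]
      by (auto simp: tentacle_path_def path_F_def side_path_def)
  qed
qed (use k_ge_2 in \<open>simp add: tentacle_path_def\<close>)

lemma witness_forest_F: "bounded_linear_forest V (witness q) gadget_ends k"
proof (rule bounded_linear_forestI)
  fix v assume v: "v \<in> V"
  show "component_path V (witness q) gadget_ends k (path_F q) (path_F q v) \<and> v \<in> set (fst (path_F q v))"
  proof (cases "\<exists>t j. v = spine t j")
    case True
    then obtain t j where "v = spine t j" by blast
    then show ?thesis using v component_path_tentacle_F
      by (simp add: path_F_def side_path_def tentacle_path_def)
  next
    case False
    then show ?thesis unfolding path_F_def
      by (intro component_path_side_path)
        (use v k_ge_2 component_path_tentacle_F in \<open>auto simp: path_F_def tentacle_path_def\<close>)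
  qed
next
  fix e assume "e \<in> witness q"
  then have "e \<in> E" using witness_subset by blast
  then show "\<exists>v\<in>V. e \<in> set (snd (path_F q v))"
  proof (cases rule: E_cases)
    case (hub i r)
    then show ?thesis using \<open>e \<in> witness q\<close>
      by (intro bexI[of _ "hub i 0"]) (auto simp: path_F_def side_path_def hub_path_def less_2_cases_iff)
  qed (use \<open>e \<in> witness q\<close> k_ge_2 in
      \<open>auto simp: path_F_def side_path_def tentacle_path_def intro!: bexI[of _ "spine _ 0"]\<close>)
qed

text \<open>Beyond its first l vertices, the G-side of a tentacle falls apart at the single spine edges;
  its segment m starts at spine t (m (l + 1) - 1).\<close>

definition segment_G :: "nat \<Rightarrow> nat \<Rightarrow> nat list \<times> nat list" where
  "segment_G t m = (map (spine t) [m * Suc l - 1..<min (m * Suc l + l) k],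
     map (\<lambda>j. spine_edge t j 1) [m * Suc l..<min (m * Suc l + l) k])"

definition path_G :: "bool \<Rightarrow> nat \<Rightarrow> nat list \<times> nat list" where
  "path_G q = side_path (\<not> q) (\<lambda>t. tentacle_path t (port_F (\<not> q) t) l 1)
     (\<lambda>t j. if j < l then tentacle_path t (port_F (\<not> q) t) l 1 else segment_G t (Suc j div Suc l))"

lemma component_path_tentacle_G:
  assumes t: "t < tentacles"
  shows "component_path V (E - witness q) gadget_ends l (path_G q) (tentacle_path t (port_F (\<not> q) t) l 1)"
  unfolding component_path_def
proof (intro conjI)
  show "is_path (E - witness q) gadget_ends (fst (tentacle_path t (port_F (\<not> q) t) l 1))
      (snd (tentacle_path t (port_F (\<not> q) t) l 1))"
    unfolding tentacle_path_def fst_conv snd_conv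
    by (rule is_path_tentacle) (use t l_ge_2 l_le_k doubled_below port_F_less_2 in auto)
  show "\<forall>u\<in>set (fst (tentacle_path t (port_F (\<not> q) t) l 1)).
      u \<in> V \<and> path_G q u = tentacle_path t (port_F (\<not> q) t) l 1"
  proof -
    have "path_G q (port_end t (port_F (\<not> q) t)) = tentacle_path t (port_F (\<not> q) t) l 1"
      unfolding path_G_def by (rule side_path_port_end[OF t])
    then show ?thesis using t l_le_k port_end_in_V[OF t port_F_less_2]
      by (auto simp: tentacle_path_def path_G_def side_path_def)
  qed
qed (use l_ge_2 in \<open>simp add: tentacle_path_def\<close>)

lemma component_path_segment_G:
  assumes t: "t < tentacles" and m: "1 \<le> m" "m * Suc l - 1 < k"
  shows "component_path V (E - witness q) gadget_ends l (path_G q) (segment_G t m)"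
proof -
  define a where "a = m * Suc l - 1"
  define b where "b = min (m * Suc l + l) k - 1"
  have m1: "1 \<le> m * Suc l" using m(1) by simp
  have sb: "Suc b = min (m * Suc l + l) k" using m1 k_ge_2 unfolding b_def by linarith
  have sa: "Suc a = m * Suc l" using m1 unfolding a_def by linarith
  have "is_path (E - witness q) gadget_ends (map (spine t) [a..<Suc b]) (map (\<lambda>j. spine_edge t j 1) [Suc a..<Suc b])"
  proof (rule is_path_spine_segment)
    show "a \<le> b" using m m1 by (simp add: a_def b_def)
    fix j assume j: "a < j" "j \<le> b"
    then have j': "m * Suc l \<le> j" "j < m * Suc l + l" "j < k" using m1 by (auto simp: a_def b_def)
    then obtain d where d: "j = m * Suc l + d" "d < l" by (metis add_less_cancel_left le_iff_add)
    then have "doubled j" using mod_Suc_mult_add[of d l m] by (simp add: doubled_def)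
    then show "spine_edge t j 1 \<in> E - witness q \<and> (spine_edge t j 1 = spine_edge t j 0 \<or> spine_edge t j 1 = spine_edge t j 1)"
      using t j' m1 by simp
  qed
  moreover have "segment_G t m = (map (spine t) [a..<Suc b], map (\<lambda>j. spine_edge t j 1) [Suc a..<Suc b])"
    using sa sb by (simp add: segment_G_def a_def)
  moreover have "u \<in> V \<and> path_G q u = segment_G t m" if "u \<in> set (fst (segment_G t m))" for u
  proof -
    have "u \<in> spine t ` {m * Suc l - 1..<min (m * Suc l + l) k}"
      using that unfolding segment_G_def by simp
    then obtain j where j: "u = spine t j" "j \<in> {m * Suc l - 1..<min (m * Suc l + l) k}" by blast
    have "l \<le> m * Suc l - 1" using m(1) by (cases m) auto
    then have "\<not> j < l" using j by simp
    moreover have "Suc j div Suc l = m" using Suc_div_Suc_eqI[OF m(1)] j(2) by simp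
    ultimately show ?thesis using j t by (simp add: path_G_def side_path_def)
  qed
  moreover have "Suc b \<le> m * Suc l + l" using sb by simp
  ultimately show ?thesis unfolding component_path_def using sa by (simp add: segment_G_def)
qed

lemma witness_forest_G: "bounded_linear_forest V (E - witness q) gadget_ends l"
proof (rule bounded_linear_forestI)
  fix v assume v: "v \<in> V"
  show "component_path V (E - witness q) gadget_ends l (path_G q) (path_G q v) \<and> v \<in> set (fst (path_G q v))"
  proof (cases "\<exists>t j. v = spine t j")
    case True
    then obtain t j where tj: "v = spine t j" "t < tentacles" "j < k" using v by auto
    show ?thesis
    proof (cases "j < l")
      case True
      then show ?thesis using tj component_path_tentacle_G
        by (simp add: path_G_def side_path_def tentacle_path_def)
    next
      case False
      then have "l \<le> j" by simp
      note bounds = Suc_div_Suc_bounds[OF this]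
      then show ?thesis using tj False component_path_segment_G[OF tj(2) bounds(1)]
        by (auto simp: path_G_def side_path_def segment_G_def)
    qed
  next
    case False
    then show ?thesis unfolding path_G_def
      by (intro component_path_side_path)
        (use v l_ge_2 component_path_tentacle_G in \<open>auto simp: path_G_def tentacle_path_def\<close>)
  qed
next
  fix e assume e: "e \<in> E - witness q"
  then have "e \<in> E" by blast
  then show "\<exists>v\<in>V. e \<in> set (snd (path_G q v))"
  proof (cases rule: E_cases)
    case (hub i r)
    then show ?thesis using e
      by (intro bexI[of _ "hub i 0"]) (auto simp: path_G_def side_path_def hub_path_def less_2_cases_iff)
  next
    case (port t s)
    then show ?thesis using e l_ge_2 l_le_k port_F_Not[of q t] port_F_less_2[of q t]
      by (intro bexI[of _ "spine t 0"]) (auto simp: path_G_def side_path_def tentacle_path_def)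
  next
    case (double t j)
    show ?thesis
    proof (cases "j < l")
      case True
      then show ?thesis using double l_le_k
        by (intro bexI[of _ "spine t 0"]) (auto simp: path_G_def side_path_def tentacle_path_def)
    next
      case False
      then have "Suc j div Suc l * Suc l \<le> j" "j < Suc j div Suc l * Suc l + l"
        using Suc_div_Suc_bounds_nonresidue[of j l] Suc_div_Suc_bounds[of l j] double(5)
        by (auto simp: doubled_def)
      then show ?thesis using double False
        by (intro bexI[of _ "spine t j"]) (auto simp: path_G_def side_path_def segment_G_def)
    qed
  qed (use e in simp)
qed

lemma witness_decomposition: "bounded_lfd V E gadget_ends k l (witness q)"
  unfolding bounded_lfd_def using witness_subset witness_forest_F witness_forest_G by blast

end

section \<open>The gadget and its size\<close>

context gadget_graph
begin

lemma degree_terminal: "i < n \<Longrightarrow> degree E gadget_ends (terminal i) = 1"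
proof -
  assume i: "i < n"
  have "{e \<in> E. terminal i \<in> gadget_ends e} = {port (2 * i) 1}"
  proof
    show "{e \<in> E. terminal i \<in> gadget_ends e} \<subseteq> {port (2 * i) 1}"
    proof
      fix e assume e: "e \<in> {e \<in> E. terminal i \<in> gadget_ends e}"
      then have "e \<in> E" by simp
      then show "e \<in> {port (2 * i) 1}"
        by (cases rule: E_cases) (use e in \<open>auto simp: port_end_def split: if_splits elim!: evenE\<close>)
    qed
    show "{port (2 * i) 1} \<subseteq> {e \<in> E. terminal i \<in> gadget_ends e}"
      using i by (auto simp: port_end_def tentacles_def)
  qed
  then show ?thesis by (simp add: degree_def)
qed

lemma is_gadget: "gadget V E gadget_ends A (card A) k l"
  unfolding gadget_def
proof (intro conjI)
  show "A \<subseteq> V" "\<forall>a\<in>A. degree E gadget_ends a = 1"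
    using degree_terminal by (auto simp: A_def)
  show "\<exists>F. bounded_lfd V E gadget_ends k l F \<and> covered A k F gadget_ends"
  proof (intro exI conjI)
    interpret gadget_decomposition k l n "witness False" by unfold_locales (rule witness_decomposition)
    show "covered A k (witness False) gadget_ends"
      using n_pos by (intro terminals_covered_F) (simp add: middle_port_in_F_def tentacles_def port_F_def hub_in_G_def)
  qed (rule witness_decomposition)
  show "\<exists>F. bounded_lfd V E gadget_ends k l F \<and> covered A l (E - F) gadget_ends"
  proof (intro exI conjI)
    interpret gadget_decomposition k l n "witness True" by unfold_locales (rule witness_decomposition)
    show "covered A l (E - witness True) gadget_ends"
      using n_pos by (intro terminals_covered_G) (simp add: middle_port_in_F_def tentacles_def port_F_def hub_in_G_def)
  qed (rule witness_decomposition)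
  show "\<forall>F. bounded_lfd V E gadget_ends k l F \<longrightarrow> covered A k F gadget_ends \<or> covered A l (E - F) gadget_ends"
  proof (intro allI impI)
    fix F assume "bounded_lfd V E gadget_ends k l F"
    then interpret gadget_decomposition k l n F by unfold_locales
    show "covered A k F gadget_ends \<or> covered A l (E - F) gadget_ends"
      using terminals_covered_F terminals_covered_G by blast
  qed
qed (rule multigraph, rule refl)

lemma card_V: "card V \<le> 4 * n + 2 * n * k"
proof -
  have "card V \<le> card ((\<lambda>(i, r). hub i r) ` ({..<n} \<times> {..<3})) + card (terminal ` {..<n})
      + card ((\<lambda>(t, j). spine t j) ` ({..<tentacles} \<times> {..<k}))"
    unfolding V_def by (meson card_Un_le add_le_mono order_trans le_refl)
  also have "\<dots> \<le> card ({..<n} \<times> {..<3::nat}) + card {..<n} + card ({..<tentacles} \<times> {..<k})"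
    by (intro add_le_mono card_image_le) auto
  also have "\<dots> \<le> 4 * n + 2 * n * k" by (simp add: tentacles_def)
  finally show ?thesis .
qed

lemma card_E: "card E \<le> 6 * n + 4 * n * k"
proof -
  have "card E \<le> card ((\<lambda>(i, r). hub_edge i r) ` ({..<n} \<times> {..<2}))
      + card ((\<lambda>(t, s). port t s) ` ({..<tentacles} \<times> {..<2}))
      + card ((\<lambda>(t, j). spine_edge t j 0) ` ({..<tentacles} \<times> {0<..<k}))
      + card ((\<lambda>(t, j). spine_edge t j 1) ` ({..<tentacles} \<times> {j \<in> {0<..<k}. doubled j}))"
    unfolding E_def by (meson card_Un_le add_le_mono order_trans le_refl)
  also have "\<dots> \<le> card ({..<n} \<times> {..<2::nat}) + card ({..<tentacles} \<times> {..<2::nat})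
      + card ({..<tentacles} \<times> {0<..<k}) + card ({..<tentacles} \<times> {j \<in> {0<..<k}. doubled j})"
    by (intro add_le_mono card_image_le) auto
  also have "\<dots> \<le> card ({..<n} \<times> {..<2::nat}) + card ({..<tentacles} \<times> {..<2::nat})
      + card ({..<tentacles} \<times> {0<..<k}) + card ({..<tentacles} \<times> {0<..<k})"
    by (intro add_le_mono card_mono) auto
  also have "\<dots> \<le> 6 * n + 4 * n * k"
  proof -
    have "tentacles \<le> 2 * n" by (simp add: tentacles_def)
    moreover from this have "tentacles * (k - 1) \<le> 2 * n * k" by (intro mult_le_mono) auto
    ultimately show ?thesis by (simp add: card_cartesian_product)
  qed
  finally show ?thesis .
qed

end

lemma card_even_below_odd: "card {i. i < 2 * a - 1 \<and> even i} = (a::nat)"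
proof -
  have "{i. i < 2 * a - 1 \<and> even i} = (\<lambda>j. 2 * j) ` {..<a}"
    by (auto elim!: evenE)
  then show ?thesis by (simp add: card_image inj_on_def)
qed

lemma gadget_exists:
  assumes "2 \<le> l" "l \<le> k" "1 \<le> \<alpha>"
  shows "\<exists>(V::nat set) (E::nat set) ends A. gadget V E ends A \<alpha> k l \<and> card V + card E \<le> (20 + 12 * k) * \<alpha>"
proof -
  interpret gadget_graph k l "2 * \<alpha> - 1" using assms by unfold_locales auto
  have "card A = \<alpha>"
    unfolding A_def using card_even_below_odd[of \<alpha>] by (simp add: card_image inj_on_def)
  moreover have "card V + card E \<le> (20 + 12 * k) * \<alpha>"
    using card_V card_E by (simp add: algebra_simps)
  ultimately show ?thesis using is_gadget by metis
qed

theorem lemma16: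
  fixes k l :: nat
  assumes "l \<ge> 2" and "k \<ge> l"
  shows "\<exists>C::nat. \<forall>\<alpha>::nat. \<alpha> \<ge> 2 \<longrightarrow>
           (\<exists>(V::nat set) (E::nat set) (ends::nat \<Rightarrow> nat set) A.
              gadget V E ends A \<alpha> k l \<and> card V + card E \<le> C * \<alpha>)"
  using gadget_exists[OF assms] by (intro exI[of _ "20 + 12 * k"]) auto

end
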